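(* Let $\overline G$ be the survival function of a nonnegative random variable and consider a Kijima type I repair model: $(A_k)_{k\ge1}$ are nonnegative random variables (degrees of repair), $(X_k)_{k\ge1}$ are nonnegative interarrival times, the virtual ages are $V_0=0$, $V_k=V_{k-1}+A_kX_k$ (so $V_k=A_1X_1+\dots+A_kX_k$), and conditionally on $(A_1,A_2,\dots)=(a_1,a_2,\dots)$, $X_1$ has survival function $\overline G$ and for each $k\ge1$ the conditional survival function of $X_{k+1}$ given $(X_1,\dots,X_k)=(x_1,\dots,x_k)$ is $z\mapsto\overline G(z\mid a_1x_1+\dots+a_kx_k)$; in particular $A_{k+1}$ is independent of $(X_1,\dots,X_k)$ for each $k$. Let $N(t)=\max\{k:X_1+\dots+X_k\le t\}$ be the associated counting process and let $T$ be a nonnegative random variable independent of $\{(X_k,A_k)\}_{k\ge1}$. If $T$ is DFR and $X_1$ (i.e. $\overline G$) is IFR, then $N(T)$ is discrete DFR.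
   Context: For $v\ge0$, $\overline G(z\mid v)=\overline G(v+z)/\overline G(v)$ if $\overline G(v)>0$ and $\overline G(z\mid v)=0$ if $\overline G(v)=0$ ($z\ge0$). A survival function $\overline G$ is DFR (resp. IFR) if for every $z\ge0$ the map $t\mapsto\overline G(z+t)/\overline G(t)$ is increasing (resp. decreasing) on $\{t:\overline G(t)>0\}$. A random variable $N$ with values in $\{0,1,2,\dots\}$ is discrete DFR if $P(N\ge n+1)^2\le P(N\ge n)P(N\ge n+2)$ for all $n=0,1,2,\dots$. *)

theory Defs
  imports "HOL-Probability.Probability"
begin

definition cond_surv :: "(real \<Rightarrow> real) \<Rightarrow> real \<Rightarrow> real \<Rightarrow> real" where
  "cond_surv G v z = (if G v > 0 then G (v + z) / G v else 0)"

definition IFR :: "(real \<Rightarrow> real) \<Rightarrow> bool" where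
  "IFR G \<longleftrightarrow> (\<forall>z\<ge>0. \<forall>s t. 0 \<le> s \<longrightarrow> s \<le> t \<longrightarrow> G s > 0 \<longrightarrow> G t > 0 \<longrightarrow>
      G (z + t) / G t \<le> G (z + s) / G s)"

definition DFR :: "(real \<Rightarrow> real) \<Rightarrow> bool" where
  "DFR G \<longleftrightarrow> (\<forall>z\<ge>0. \<forall>s t. 0 \<le> s \<longrightarrow> s \<le> t \<longrightarrow> G s > 0 \<longrightarrow> G t > 0 \<longrightarrow>
      G (z + s) / G s \<le> G (z + t) / G t)"

definition surv :: "'a measure \<Rightarrow> ('a \<Rightarrow> real) \<Rightarrow> real \<Rightarrow> real" where
  "surv M Y t = measure M {\<omega> \<in> space M. Y \<omega> > t}"

definition vage :: "(nat \<Rightarrow> 'a \<Rightarrow> real) \<Rightarrow> (nat \<Rightarrow> 'a \<Rightarrow> real) \<Rightarrow> nat \<Rightarrow> 'a \<Rightarrow> real" where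
  "vage A X k \<omega> = (\<Sum>j\<in>{1..k}. A j \<omega> * X j \<omega>)"

text \<open>Counting process N(t) = max {k. X_1 + ... + X_k <= t}, taken as a supremum in
  the extended naturals (it equals the maximum whenever that exists).\<close>
definition Ncount :: "(nat \<Rightarrow> 'a \<Rightarrow> real) \<Rightarrow> real \<Rightarrow> 'a \<Rightarrow> enat" where
  "Ncount X t \<omega> = Sup {enat k | k. (\<Sum>j\<in>{1..k}. X j \<omega>) \<le> t}"

definition discrete_DFR :: "'a measure \<Rightarrow> ('a \<Rightarrow> enat) \<Rightarrow> bool" where
  "discrete_DFR M N \<longleftrightarrow> (\<forall>n::nat.
     (measure M {\<omega> \<in> space M. N \<omega> \<ge> enat (n + 1)})\<^sup>2 \<le>
     measure M {\<omega> \<in> space M. N \<omega> \<ge> enat n} * measure M {\<omega> \<in> space M. N \<omega> \<ge> enat (n + 2)})"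

end

theory Submission
  imports Defs
begin

text \<open>
  Write F s = P(T \<ge> s) and S_n = X_1 + ... + X_n. Since N(T) \<ge> n iff S_n \<le> T and T is independent
  of the repair process, p_n = P(N(T) \<ge> n) = E F(S_n). Given the history up to the n-th failure, the
  next interarrival time has the residual-life law of G at the virtual age V_n, so p_(n+1) = E \<phi>_n with
  \<phi>_n = E[F(S_n + X_(n+1)) | history]. Put \<rho>_n = \<phi>_n / F(S_n), which lies in [0, 1]. Then
  p_(n+1) = E[F(S_n) \<rho>_n], and Cauchy-Schwarz with weight F(S_n) gives
  p_(n+1)^2 \<le> p_n E[F(S_n) \<rho>_n^2] = p_n E[\<phi>_n \<rho>_n] = p_n E[F(S_(n+1)) \<rho>_n].
  Finally F(S_(n+1)) \<rho>_n \<le> \<phi>_(n+1) pointwise: DFR of T gives F(s' + x) F(s) \<ge> F(s + x) F(s') for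
  s \<le> s', and IFR of G makes the residual life stochastically shorter at the larger age
  V_(n+1) \<ge> V_n, which can only increase E F(s + X). Hence p_(n+1)^2 \<le> p_n p_(n+2).
\<close>

section \<open>Survival functions\<close>

lemma DFR_mult:
  assumes "DFR S" "0 \<le> z" "0 \<le> a" "a \<le> b" "0 < S a" "0 < S b"
  shows "S (z + a) * S b \<le> S (z + b) * S a"
  using assms unfolding DFR_def by (auto simp: field_simps)

definition surv_left :: "'a measure \<Rightarrow> ('a \<Rightarrow> real) \<Rightarrow> real \<Rightarrow> real" where
  "surv_left M Y t = measure M {\<omega> \<in> space M. t \<le> Y \<omega>}"

context prob_space
begin

lemma surv_left_nonneg: "0 \<le> surv_left M Y t"
  by (simp add: surv_left_def)

lemma surv_left_le_1: "surv_left M Y t \<le> 1"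
  by (simp add: surv_left_def)

lemma surv_left_antimono:
  "Y \<in> borel_measurable M \<Longrightarrow> s \<le> t \<Longrightarrow> surv_left M Y t \<le> surv_left M Y s"
  unfolding surv_left_def by (intro finite_measure_mono) auto

lemma borel_measurable_surv_left:
  assumes "Y \<in> borel_measurable M"
  shows "surv_left M Y \<in> borel_measurable borel"
proof -
  have "mono (\<lambda>t. surv_left M Y (- t))"
    using surv_left_antimono[OF assms] by (simp add: mono_def)
  then have "(\<lambda>t. surv_left M Y (- t)) \<in> borel_measurable borel"
    by (rule borel_measurable_mono)
  then have "(\<lambda>t. surv_left M Y (- (- t))) \<in> borel_measurable borel"
    by measurable
  then show ?thesis by simp
qed

lemma surv_left_nonpos:
  "(\<And>\<omega>. \<omega> \<in> space M \<Longrightarrow> 0 \<le> Y \<omega>) \<Longrightarrow> t \<le> 0 \<Longrightarrow> surv_left M Y t = 1"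
  unfolding surv_left_def by (subst Collect_cong[where Q="\<lambda>\<omega>. \<omega> \<in> space M"]) (force simp: prob_space)+

lemma surv_left_le_surv:
  "Y \<in> borel_measurable M \<Longrightarrow> u < t \<Longrightarrow> surv_left M Y t \<le> surv M Y u"
  unfolding surv_left_def surv_def by (intro finite_measure_mono) auto

lemma surv_tendsto_surv_left:
  assumes Y[measurable]: "Y \<in> borel_measurable M" and c: "0 < c"
  shows "(\<lambda>m. surv M Y (t - c / Suc m)) \<longlonglongrightarrow> surv_left M Y t"
proof -
  define B where "B m = {\<omega> \<in> space M. t - c / Suc m < Y \<omega>}" for m
  have "c / Suc (Suc m) \<le> c / Suc m" for m
    using c by (intro divide_left_mono) auto
  then have "decseq B"
    unfolding B_def by (intro decseq_SucI) (smt (verit) Collect_mono)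
  moreover have "(\<Inter>m. B m) = {\<omega> \<in> space M. t \<le> Y \<omega>}"
  proof (intro equalityI subsetI)
    fix \<omega> assume \<omega>: "\<omega> \<in> (\<Inter>m. B m)"
    have "t - c / Suc m \<le> Y \<omega>" for m
      using \<omega> by (simp add: B_def less_imp_le)
    moreover have "(\<lambda>m. t - c * inverse (Suc m)) \<longlonglongrightarrow> t - c * 0"
      by (intro tendsto_intros LIMSEQ_inverse_real_of_nat)
    ultimately have "t \<le> Y \<omega>"
      by (intro LIMSEQ_le_const2) (auto simp: divide_inverse)
    then show "\<omega> \<in> {\<omega> \<in> space M. t \<le> Y \<omega>}"
      using \<omega> by (auto simp: B_def)
  qed (use c in \<open>auto simp: B_def intro: less_le_trans[rotated]\<close>)
  moreover have "range B \<subseteq> sets M"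
    by (auto simp: B_def)
  ultimately have "(\<lambda>m. measure M (B m)) \<longlonglongrightarrow> measure M {\<omega> \<in> space M. t \<le> Y \<omega>}"
    using finite_Lim_measure_decseq by metis
  then show ?thesis unfolding B_def surv_def surv_left_def by simp
qed

lemma emeasure_distr_atLeast:
  "Y \<in> borel_measurable M \<Longrightarrow> emeasure (distr M borel Y) {t..} = ennreal (surv_left M Y t)"
  by (subst emeasure_distr) (auto simp: surv_left_def emeasure_eq_measure intro!: arg_cong[where f="measure M"])

text \<open>DFR is stated for P(Y > t); it passes to P(Y \<ge> t) by approaching all ages from the left.\<close>

lemma DFR_surv_left_pos_age:
  assumes Y: "Y \<in> borel_measurable M" and DFR: "DFR (surv M Y)"
    and s: "0 < s" "s \<le> t" and x: "0 \<le> x" and Ft: "0 < surv_left M Y t"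
  shows "surv_left M Y (s + x) * surv_left M Y t \<le> surv_left M Y (t + x) * surv_left M Y s"
proof -
  let ?F = "surv_left M Y" and ?S = "surv M Y"
  have "?S (x + (s - s / Suc m)) * ?S (t - s / Suc m) \<le> ?S (x + (t - s / Suc m)) * ?S (s - s / Suc m)"
    for m
  proof (rule DFR_mult[OF DFR x])
    have "s / Suc m \<le> s" "0 < s / Suc m"
      using s by (simp_all add: divide_le_eq)
    then have "0 \<le> s - s / Suc m" "s - s / Suc m < t" "t - s / Suc m < t"
      using s by linarith+
    then show "0 \<le> s - s / Suc m" "s - s / Suc m \<le> t - s / Suc m"
      "0 < ?S (s - s / Suc m)" "0 < ?S (t - s / Suc m)"
      using s Ft surv_left_le_surv[OF Y, of _ t] by (auto intro: less_le_trans)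
  qed
  moreover have "(\<lambda>m. ?S (x + (s - s / Suc m)) * ?S (t - s / Suc m)) \<longlonglongrightarrow> ?F (s + x) * ?F t"
    using surv_tendsto_surv_left[OF Y s(1), of "s + x"] surv_tendsto_surv_left[OF Y s(1), of t]
    by (intro tendsto_mult) (simp_all add: algebra_simps)
  moreover have "(\<lambda>m. ?S (x + (t - s / Suc m)) * ?S (s - s / Suc m)) \<longlonglongrightarrow> ?F (t + x) * ?F s"
    using surv_tendsto_surv_left[OF Y s(1), of "t + x"] surv_tendsto_surv_left[OF Y s(1), of s]
    by (intro tendsto_mult) (simp_all add: algebra_simps)
  ultimately show ?thesis
    by (intro LIMSEQ_le) auto
qed

text \<open>At age 0, DFR says that the lifetime is new worse than used.\<close>

lemma DFR_surv_left_new_worse_than_used: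
  assumes Y: "Y \<in> borel_measurable M" and DFR: "DFR (surv M Y)"
    and t: "0 < t" and x: "0 < x" and Ft: "0 < surv_left M Y t"
  shows "surv_left M Y x * surv_left M Y t \<le> surv_left M Y (t + x)"
proof -
  let ?F = "surv_left M Y" and ?S = "surv M Y"
  define c where "c = min x t"
  have c: "0 < c" "c \<le> x" "c \<le> t"
    using t x by (auto simp: c_def)
  have "?S (x - c / Suc m) * ?S (t - c / Suc m) \<le> ?S (x - c / Suc m + (t - c / Suc m))" for m
  proof -
    have "c / Suc m \<le> c" "0 < c / Suc m"
      using c by (simp_all add: divide_le_eq)
    then have "0 \<le> x - c / Suc m" "0 \<le> t - c / Suc m" "0 < t" "t - c / Suc m < t"
      using c by linarith+
    then have "?S (x - c / Suc m + 0) * ?S (t - c / Suc m) \<le> ?S (x - c / Suc m + (t - c / Suc m)) * ?S 0"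
      using Ft surv_left_le_surv[OF Y, of _ t] by (intro DFR_mult[OF DFR]) (auto intro: less_le_trans)
    also have "\<dots> \<le> ?S (x - c / Suc m + (t - c / Suc m))"
      by (intro mult_left_le) (auto simp: surv_def)
    finally show ?thesis by simp
  qed
  moreover have "(\<lambda>m. ?S (x - c / Suc m) * ?S (t - c / Suc m)) \<longlonglongrightarrow> ?F x * ?F t"
    using surv_tendsto_surv_left[OF Y c(1)] by (intro tendsto_mult)
  moreover have "(\<lambda>m. ?S (x - c / Suc m + (t - c / Suc m))) \<longlonglongrightarrow> ?F (t + x)"
    using surv_tendsto_surv_left[OF Y, of "2 * c" "t + x"] c by (simp add: algebra_simps add_divide_distrib)
  ultimately show ?thesis
    by (intro LIMSEQ_le) auto
qed

lemma DFR_surv_left: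
  assumes Y: "Y \<in> borel_measurable M"
    and Y_nonneg: "\<And>\<omega>. \<omega> \<in> space M \<Longrightarrow> 0 \<le> Y \<omega>" and DFR: "DFR (surv M Y)"
    and s: "0 \<le> s" "s \<le> t" and x: "0 \<le> x"
  shows "surv_left M Y (s + x) * surv_left M Y t \<le> surv_left M Y (t + x) * surv_left M Y s"
proof (cases "0 < surv_left M Y t")
  case False
  then show ?thesis
    using surv_left_nonneg[of Y t] surv_left_nonneg[of Y "t + x"] surv_left_nonneg[of Y s] by simp
next
  case Ft: True
  have F0: "surv_left M Y 0 = 1"
    by (rule surv_left_nonpos[OF Y_nonneg]) auto
  consider "0 < s" | "s = 0" "t = 0 \<or> x = 0" | "s = 0" "0 < t" "0 < x"
    using s x by linarith
  then show ?thesis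
  proof cases
    case 1
    then show ?thesis using DFR_surv_left_pos_age[OF Y DFR _ s(2) x Ft] by simp
  next
    case 2
    then show ?thesis by (auto simp: F0)
  next
    case 3
    then show ?thesis using DFR_surv_left_new_worse_than_used[OF Y DFR _ _ Ft] by (simp add: F0)
  qed
qed

end

text \<open>Both sides are P(s + Z \<le> Y) for Z of law K independent of Y.\<close>

lemma (in prob_space) nn_integral_surv_left_eq:
  assumes Y[measurable]: "Y \<in> borel_measurable M"
    and K: "prob_space K" and sets_K[measurable_cong]: "sets K = sets borel"
  shows "(\<integral>\<^sup>+x. ennreal (surv_left M Y (s + x)) \<partial>K) = (\<integral>\<^sup>+y. emeasure K {..y - s} \<partial>distr M borel Y)"
proof -
  let ?L = "distr M borel Y"
  interpret L: prob_space ?L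
    by (rule prob_space_distr) simp
  interpret K: prob_space K
    by (rule K)
  interpret pair_sigma_finite ?L K ..
  define D where "D = {p :: real \<times> real. s + snd p \<le> fst p}"
  have "D = {p \<in> space (?L \<Otimes>\<^sub>M K). s + snd p \<le> fst p}"
    by (simp add: D_def space_pair_measure sets_eq_imp_space_eq[OF sets_K])
  also have "\<dots> \<in> sets (?L \<Otimes>\<^sub>M K)"
    by measurable
  finally have D: "D \<in> sets (?L \<Otimes>\<^sub>M K)" .
  have "(\<lambda>y. (y, x)) -` D = {s + x..}" for x
    by (auto simp: D_def)
  then have "emeasure ?L ((\<lambda>y. (y, x)) -` D) = ennreal (surv_left M Y (s + x))" for x
    by (simp add: emeasure_distr_atLeast)
  then have "(\<integral>\<^sup>+x. ennreal (surv_left M Y (s + x)) \<partial>K) = emeasure (?L \<Otimes>\<^sub>M K) D"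
    by (simp add: emeasure_pair_measure_alt2[OF D])
  also have "\<dots> = (\<integral>\<^sup>+y. emeasure K (Pair y -` D) \<partial>?L)"
    by (rule K.emeasure_pair_measure_alt[OF D])
  also have "(\<lambda>y. Pair y -` D) = (\<lambda>y. {..y - s})"
    by (auto simp: D_def)
  finally show ?thesis
    by simp
qed

lemma (in prob_space) nn_integral_surv_left_mono:
  assumes "Y \<in> borel_measurable M"
    and "prob_space K" "sets K = sets borel" and "prob_space K'" "sets K' = sets borel"
    and "\<And>c. emeasure K {..c} \<le> emeasure K' {..c}"
  shows "(\<integral>\<^sup>+x. ennreal (surv_left M Y (s + x)) \<partial>K) \<le> (\<integral>\<^sup>+x. ennreal (surv_left M Y (s + x)) \<partial>K')"
  using assms by (simp add: nn_integral_surv_left_eq nn_integral_mono)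

section \<open>Residual life\<close>

lemma sets_borel_eq_sigma_sets_Ioi: "sets (borel :: real measure) = sigma_sets UNIV (range greaterThan)"
  by (subst borel_Ioi) (simp add: sets_measure_of)

lemma Int_stable_Ioi: "Int_stable (range greaterThan :: real set set)"
proof (clarsimp simp: Int_stable_def)
  fix a b :: real
  have "{a<..} \<inter> {b<..} = {max a b<..}" by auto
  then show "{a<..} \<inter> {b<..} \<in> range greaterThan" by blast
qed

locale survival_function =
  fixes \<mu> :: "real measure" and G :: "real \<Rightarrow> real"
  assumes prob_space_\<mu>: "prob_space \<mu>" and sets_\<mu>: "sets \<mu> = sets borel"
    and G_eq: "\<And>t. G t = measure \<mu> {t<..}"
begin

interpretation \<mu>: prob_space \<mu>
  by (rule prob_space_\<mu>)

lemma space_\<mu>[simp]: "space \<mu> = UNIV"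
  using sets_eq_imp_space_eq[OF sets_\<mu>] by simp

lemma sets_\<mu>_Ioi[simp]: "{t<..} \<in> sets \<mu>"
  using sets_\<mu> by simp

lemma G_nonneg: "0 \<le> G t"
  by (simp add: G_eq)

lemma G_antimono: "s \<le> t \<Longrightarrow> G t \<le> G s"
  unfolding G_eq by (intro \<mu>.finite_measure_mono) (auto simp: sets_\<mu>)

lemma emeasure_\<mu>_Ioi: "emeasure \<mu> {t<..} = ennreal (G t)"
  by (simp add: G_eq \<mu>.emeasure_eq_measure)

lemma borel_measurable_G[measurable]: "G \<in> borel_measurable borel"
proof -
  have "mono (\<lambda>t. G (- t))"
    using G_antimono by (simp add: mono_def)
  then have "(\<lambda>t. G (- (- t))) \<in> borel_measurable borel"
    by (intro measurable_compose[OF borel_measurable_uminus borel_measurable_mono]) auto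
  then show ?thesis by simp
qed

text \<open>When G v = 0, the residual life is the point mass at 0, matching the value 0 of cond_surv.\<close>

definition residual :: "real \<Rightarrow> real measure" where
  "residual v = (if 0 < G v then distr (uniform_measure \<mu> {v<..}) borel (\<lambda>y. y - v) else return borel 0)"

definition residual_surv :: "real \<Rightarrow> real \<Rightarrow> real" where
  "residual_surv v z = (if z < 0 then 1 else cond_surv G v z)"

lemma sets_residual[simp, measurable_cong]: "sets (residual v) = sets borel"
  and space_residual[simp]: "space (residual v) = UNIV"
  by (auto simp: residual_def)

lemma measurable_uniform_measure_\<mu>[simp]: "measurable (uniform_measure \<mu> S) N = measurable borel N"
  by (rule measurable_cong_sets) (simp_all add: sets_\<mu>)

lemma prob_space_residual: "prob_space (residual v)"
proof (cases "0 < G v")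
  case True
  then have "prob_space (uniform_measure \<mu> {v<..})"
    by (intro prob_space_uniform_measure) (auto simp: emeasure_\<mu>_Ioi sets_\<mu>)
  then show ?thesis
    using True by (simp add: residual_def prob_space.prob_space_distr)
qed (simp add: residual_def prob_space_return)

lemma emeasure_residual_Ioi: "emeasure (residual v) {z<..} = ennreal (residual_surv v z)"
proof (cases "0 < G v")
  case True
  have "emeasure (residual v) {z<..} = emeasure (uniform_measure \<mu> {v<..}) ((\<lambda>y. y - v) -` {z<..})"
    using True by (simp add: residual_def emeasure_distr)
  also have "(\<lambda>y. y - v) -` {z<..} = {z + v<..}"
    by auto
  also have "emeasure (uniform_measure \<mu> {v<..}) {z + v<..} = emeasure \<mu> ({v<..} \<inter> {z + v<..}) / emeasure \<mu> {v<..}"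
    by (rule emeasure_uniform_measure) simp_all
  also have "{v<..} \<inter> {z + v<..} = {max v (v + z)<..}"
    by auto
  also have "emeasure \<mu> {max v (v + z)<..} / emeasure \<mu> {v<..} = ennreal (residual_surv v z)"
    using True
    by (auto simp: emeasure_\<mu>_Ioi divide_ennreal G_nonneg residual_surv_def cond_surv_def max_def)
  finally show ?thesis .
qed (auto simp: residual_def residual_surv_def cond_surv_def)

lemma residual_surv_nonneg: "0 \<le> residual_surv v z"
  by (simp add: residual_surv_def cond_surv_def G_nonneg)

lemma residual_surv_le_1: "residual_surv v z \<le> 1"
  using G_antimono[of v "v + z"] by (auto simp: residual_surv_def cond_surv_def divide_le_eq_1)

lemma borel_measurable_residual_surv[measurable]: "(\<lambda>v. residual_surv v z) \<in> borel_measurable borel"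
  unfolding residual_surv_def cond_surv_def by measurable

lemma emeasure_residual_atMost: "emeasure (residual v) {..c} = ennreal (1 - residual_surv v c)"
proof -
  interpret prob_space "residual v"
    by (rule prob_space_residual)
  have "measure (residual v) {c<..} = residual_surv v c"
    using emeasure_residual_Ioi[of v c] residual_surv_nonneg by (simp add: measure_def)
  moreover have "{..c} = space (residual v) - {c<..}"
    by auto
  ultimately show ?thesis
    using prob_compl[of "{c<..}"] by (simp add: emeasure_eq_measure)
qed

lemma residual_in_prob_algebra[measurable]: "residual \<in> borel \<rightarrow>\<^sub>M prob_algebra borel"
  by (rule measurable_prob_algebra_generated[OF sets_borel_eq_sigma_sets_Ioi Int_stable_Ioi])
     (auto simp: prob_space_residual emeasure_residual_Ioi)

lemma residual_in_subprob_algebra[measurable]: "residual \<in> borel \<rightarrow>\<^sub>M subprob_algebra borel"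
  by (rule measurable_prob_algebraD) simp

lemma AE_residual_nonneg: "AE x in residual v. 0 \<le> x"
proof (cases "0 < G v")
  case True
  have "AE y in uniform_measure \<mu> {v<..}. 0 \<le> y - v"
    by (rule AE_uniform_measureI) (auto simp: sets_\<mu>)
  then have "AE x in distr (uniform_measure \<mu> {v<..}) borel (\<lambda>y. y - v). 0 \<le> x"
    by (subst AE_distr_iff) auto
  moreover have "residual v = distr (uniform_measure \<mu> {v<..}) borel (\<lambda>y. y - v)"
    using True by (simp add: residual_def)
  ultimately show ?thesis
    by metis
next
  case False
  then have "residual v = return borel 0"
    by (simp add: residual_def)
  moreover have "AE x in return borel (0::real). 0 \<le> x"
    by (simp add: AE_return)
  ultimately show ?thesis
    by metis
qed

lemma IFR_residual_surv_antimono: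
  assumes "IFR G" "0 \<le> v" "v \<le> w"
  shows "residual_surv w z \<le> residual_surv v z"
proof (cases "z < 0 \<or> G w = 0")
  case True
  then show ?thesis
    using residual_surv_nonneg[of v z] by (auto simp: residual_surv_def cond_surv_def)
next
  case False
  then have "0 < G w" "0 < G v"
    using G_nonneg[of w] G_antimono[OF assms(3)] by auto
  moreover have "G (z + w) / G w \<le> G (z + v) / G v"
    using False assms calculation unfolding IFR_def by auto
  ultimately show ?thesis
    using False by (simp add: residual_surv_def cond_surv_def add.commute)
qed

end

section \<open>The Kijima type I model\<close>

lemma (in finite_measure) integrable_nonneg_le_1:
  fixes f :: "'a \<Rightarrow> real"
  assumes "f \<in> borel_measurable M" "\<And>x. 0 \<le> f x" "\<And>x. f x \<le> 1"
  shows "integrable M f"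
  by (rule integrable_const_bound[where B=1]) (use assms in \<open>auto intro!: AE_I2\<close>)

lemma integral_mult_square_le:
  fixes f g :: "'a \<Rightarrow> real"
  assumes f: "integrable M f" and fg: "integrable M (\<lambda>x. f x * g x)"
    and fgg: "integrable M (\<lambda>x. f x * (g x)\<^sup>2)" and f_nonneg: "\<And>x. x \<in> space M \<Longrightarrow> 0 \<le> f x"
  shows "(\<integral>x. f x * g x \<partial>M)\<^sup>2 \<le> (\<integral>x. f x \<partial>M) * (\<integral>x. f x * (g x)\<^sup>2 \<partial>M)"
proof -
  define a where "a = (\<integral>x. f x \<partial>M)"
  define b where "b = (\<integral>x. f x * g x \<partial>M)"
  define c where "c = (\<integral>x. f x * (g x)\<^sup>2 \<partial>M)"
  have "0 \<le> (\<integral>x. f x * (a * g x - b)\<^sup>2 \<partial>M)"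
    by (intro integral_nonneg_AE AE_I2) (simp add: f_nonneg)
  also have "(\<integral>x. f x * (a * g x - b)\<^sup>2 \<partial>M)
      = (\<integral>x. a\<^sup>2 * (f x * (g x)\<^sup>2) - 2 * a * b * (f x * g x) + b\<^sup>2 * f x \<partial>M)"
    by (intro Bochner_Integration.integral_cong) (simp_all add: power2_eq_square algebra_simps)
  also have "\<dots> = a\<^sup>2 * c - 2 * a * b * b + b\<^sup>2 * a"
    using f fg fgg unfolding a_def b_def c_def
    by (subst Bochner_Integration.integral_add; (subst Bochner_Integration.integral_diff)?) auto
  finally have *: "0 \<le> a * (a * c - b\<^sup>2)"
    by (simp add: power2_eq_square algebra_simps)
  show ?thesis
  proof (cases "a = 0")
    case True
    then have "AE x in M. f x = 0"
      using integral_nonneg_eq_0_iff_AE[OF f] f_nonneg by (simp add: a_def)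
    then have "b = 0"
      unfolding b_def using fg by (subst integral_cong_AE[where g="\<lambda>_. 0"]) auto
    then show ?thesis using True by (simp add: a_def b_def)
  next
    case False
    then have "0 < a"
      unfolding a_def using f_nonneg by (simp add: integral_nonneg order_le_neq_trans)
    then show ?thesis using * by (simp add: a_def b_def c_def zero_le_mult_iff)
  qed
qed

lemma enat_le_Ncount_iff:
  assumes X_nonneg: "\<And>j. 1 \<le> j \<Longrightarrow> 0 \<le> X j \<omega>" and t: "0 \<le> t"
  shows "enat n \<le> Ncount X t \<omega> \<longleftrightarrow> (\<Sum>j\<in>{1..n}. X j \<omega>) \<le> t"
proof
  assume "(\<Sum>j\<in>{1..n}. X j \<omega>) \<le> t"
  then show "enat n \<le> Ncount X t \<omega>"
    unfolding Ncount_def by (intro Sup_upper) blast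
next
  assume n: "enat n \<le> Ncount X t \<omega>"
  show "(\<Sum>j\<in>{1..n}. X j \<omega>) \<le> t"
  proof (rule ccontr)
    assume gt: "\<not> (\<Sum>j\<in>{1..n}. X j \<omega>) \<le> t"
    have "k < n" if "(\<Sum>j\<in>{1..k}. X j \<omega>) \<le> t" for k
    proof (rule ccontr)
      assume "\<not> k < n"
      then have "(\<Sum>j\<in>{1..n}. X j \<omega>) \<le> (\<Sum>j\<in>{1..k}. X j \<omega>)"
        by (intro sum_mono2) (auto intro: X_nonneg)
      then show False using that gt by simp
    qed
    moreover have "0 < n"
      using gt t by (cases n) auto
    ultimately have "Ncount X t \<omega> \<le> enat (n - 1)"
      unfolding Ncount_def by (intro Sup_least) force
    with n have "enat n \<le> enat (n - 1)"
      by (rule order_trans)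
    then show False using \<open>0 < n\<close> by simp
  qed
qed

lemma UN_Ioi_minus_of_nat: "(\<Union>i::nat. {- real i <..}) = UNIV"
proof -
  have "\<exists>i::nat. - real i < y" for y :: real
    using reals_Archimedean2[of "- y"] by (metis neg_less_iff_less minus_minus)
  then show ?thesis
    by auto
qed

lemma sets_pair_measure_borel_Ioi:
  "sets (N \<Otimes>\<^sub>M (borel :: real measure)) = sigma_sets (space N \<times> UNIV) {B \<times> {z<..} | B z. B \<in> sets N}"
proof -
  have "sets (N \<Otimes>\<^sub>M (borel :: real measure)) =
      sets (sigma (space N \<times> space borel) {B \<times> C | B C. B \<in> sets N \<and> C \<in> range greaterThan})"
  proof (rule sets_pair_eq[where Ca="{space N}" and Cb="range (\<lambda>i::nat. {- real i <..})"])
    show "\<Union> (range (\<lambda>i::nat. {- real i <..})) = space (borel :: real measure)"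
      by (simp add: UN_Ioi_minus_of_nat)
  qed (auto simp: sets.sigma_sets_eq sets_borel_eq_sigma_sets_Ioi dest: sets.sets_into_space)
  also have "{B \<times> C | B C. B \<in> sets N \<and> C \<in> range greaterThan} = {B \<times> {z<..} | B z. B \<in> sets N}"
    by auto
  also have "sets (sigma (space N \<times> space borel) {B \<times> {z<..} | B (z :: real). B \<in> sets N}) =
      sigma_sets (space N \<times> space borel) {B \<times> {z<..} | B z. B \<in> sets N}"
    by (rule sets_measure_of) (use sets.sets_into_space in auto)
  finally show ?thesis
    by simp
qed

lemma Int_stable_pair_Ioi: "Int_stable {B \<times> {z<..} | B (z :: real). B \<in> sets N}"
proof (rule Int_stableI)
  fix a b assume "a \<in> {B \<times> {z<..} | B (z :: real). B \<in> sets N}" "b \<in> {B \<times> {z<..} | B (z :: real). B \<in> sets N}"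
  then obtain B z B' z' where "a = B \<times> {z<..}" "b = B' \<times> {(z' :: real)<..}" "B \<in> sets N" "B' \<in> sets N"
    by auto
  moreover have "B \<times> {z<..} \<inter> B' \<times> {z'<..} = (B \<inter> B') \<times> {max z z'<..}"
    by auto
  ultimately show "a \<inter> b \<in> {B \<times> {z<..} | B z. B \<in> sets N}"
    by blast
qed

lemma measure_eqI_pair_borel_Ioi:
  fixes P Q :: "('b \<times> real) measure"
  assumes "sets P = sets (N \<Otimes>\<^sub>M borel)" "sets Q = sets (N \<Otimes>\<^sub>M borel)" "finite_measure P"
    and "\<And>B z. B \<in> sets N \<Longrightarrow> emeasure P (B \<times> {z<..}) = emeasure Q (B \<times> {z<..})"
  shows "P = Q"
proof (rule measure_eqI_generator_eq[OF Int_stable_pair_Ioi, where A="\<lambda>i. space N \<times> {- real i<..}"])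
  show "(\<Union>i. space N \<times> {- real i<..}) = space N \<times> UNIV"
    using UN_Ioi_minus_of_nat by blast
  show "emeasure P (space N \<times> {- real i<..}) \<noteq> \<infinity>" for i
    using finite_measure.emeasure_finite[OF assms(3)] by simp
qed (use assms in \<open>auto simp: sets_pair_measure_borel_Ioi finite_measure.emeasure_finite
      dest: sets.sets_into_space\<close>)

lemma measurable_fst_real_pair[measurable]: "fst \<in> (borel :: (real \<times> real) measure) \<rightarrow>\<^sub>M borel"
  by (intro borel_measurable_continuous_onI continuous_on_fst continuous_on_id)

lemma measurable_snd_real_pair[measurable]: "snd \<in> (borel :: (real \<times> real) measure) \<rightarrow>\<^sub>M borel"
  by (intro borel_measurable_continuous_onI continuous_on_snd continuous_on_id)

abbreviation hist_space :: "(nat \<Rightarrow> real \<times> real) measure" where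
  "hist_space \<equiv> PiM UNIV (\<lambda>_. borel)"

lemma space_hist_space[simp]: "space hist_space = UNIV"
  by (auto simp: space_PiM intro!: PiE_I)

definition hist_age :: "nat \<Rightarrow> (nat \<Rightarrow> real \<times> real) \<Rightarrow> real" where
  "hist_age k h = (\<Sum>j\<in>{1..k}. fst (h j) * snd (h j))"

definition hist_arrival :: "nat \<Rightarrow> (nat \<Rightarrow> real \<times> real) \<Rightarrow> real" where
  "hist_arrival k h = (\<Sum>j\<in>{1..k}. snd (h j))"

lemma measurable_hist_age[measurable]: "hist_age k \<in> borel_measurable hist_space"
  unfolding hist_age_def by measurable

lemma measurable_hist_arrival[measurable]: "hist_arrival k \<in> borel_measurable hist_space"
  unfolding hist_arrival_def by measurable

lemma (in prob_space) indep_set_mono: "indep_set A B \<Longrightarrow> A' \<subseteq> A \<Longrightarrow> B' \<subseteq> B \<Longrightarrow> indep_set A' B'"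
  unfolding indep_set_def by (rule indep_sets_mono_sets) (auto split: bool.split)

lemma Int_stable_vimage_sets: "Int_stable {f -` B \<inter> space M | B. B \<in> sets N}"
proof (safe intro!: Int_stableI)
  fix B C assume "B \<in> sets N" "C \<in> sets N"
  then show "\<exists>D. (f -` B \<inter> space M) \<inter> (f -` C \<inter> space M) = f -` D \<inter> space M \<and> D \<in> sets N"
    by (intro exI[of _ "B \<inter> C"]) auto
qed

locale kijima_model = prob_space M + survival_function \<mu> G
  for M :: "'a measure" and \<mu> G +
  fixes A X :: "nat \<Rightarrow> 'a \<Rightarrow> real" and T :: "'a \<Rightarrow> real"
  assumes A_meas: "\<And>k. 1 \<le> k \<Longrightarrow> A k \<in> borel_measurable M"
    and X_meas: "\<And>k. 1 \<le> k \<Longrightarrow> X k \<in> borel_measurable M"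
    and A_nonneg: "\<And>k \<omega>. 1 \<le> k \<Longrightarrow> \<omega> \<in> space M \<Longrightarrow> 0 \<le> A k \<omega>"
    and X_nonneg: "\<And>k \<omega>. 1 \<le> k \<Longrightarrow> \<omega> \<in> space M \<Longrightarrow> 0 \<le> X k \<omega>"
    and kijima: "\<And>k z B. 0 \<le> z \<Longrightarrow> B \<in> sets hist_space \<Longrightarrow>
        measure M ({\<omega> \<in> space M.
              (\<lambda>j. (if 1 \<le> j then A j \<omega> else 0, if j \<in> {1..k} then X j \<omega> else 0)) \<in> B}
            \<inter> {\<omega> \<in> space M. X (Suc k) \<omega> > z})
        = (\<integral>\<omega>\<in>{\<omega> \<in> space M.
              (\<lambda>j. (if 1 \<le> j then A j \<omega> else 0, if j \<in> {1..k} then X j \<omega> else 0)) \<in> B}.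
              cond_surv G (vage A X k \<omega>) z \<partial>M)"
    and T_meas[measurable]: "T \<in> borel_measurable M"
    and T_nonneg: "\<And>\<omega>. \<omega> \<in> space M \<Longrightarrow> 0 \<le> T \<omega>"
    and T_indep: "indep_set {T -` S \<inter> space M | S. S \<in> sets borel}
        {(\<lambda>\<omega> k. (if 1 \<le> k then X k \<omega> else 0, if 1 \<le> k then A k \<omega> else 0)) -` S \<inter> space M
          | S. S \<in> sets hist_space}"
begin

lemma borel_measurable_surv_left_T[measurable]: "surv_left M T \<in> borel_measurable borel"
  by (rule borel_measurable_surv_left[OF T_meas])

text \<open>The history at step k records all degrees of repair A_j but only the interarrival times
  X_1, ..., X_k, exactly as the conditioning in the hypothesis kijima.\<close>

definition history :: "nat \<Rightarrow> 'a \<Rightarrow> nat \<Rightarrow> real \<times> real" where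
  "history k \<omega> = (\<lambda>j. (if 1 \<le> j then A j \<omega> else 0, if j \<in> {1..k} then X j \<omega> else 0))"

definition arrival :: "nat \<Rightarrow> 'a \<Rightarrow> real" where
  "arrival k \<omega> = (\<Sum>j\<in>{1..k}. X j \<omega>)"

lemma measurable_history[measurable]: "history k \<in> M \<rightarrow>\<^sub>M hist_space"
  unfolding history_def
proof (rule measurable_PiM_single')
  fix j :: nat
  have "(\<lambda>\<omega>. if 1 \<le> j then A j \<omega> else 0) \<in> borel_measurable M"
    and "(\<lambda>\<omega>. if j \<in> {1..k} then X j \<omega> else 0) \<in> borel_measurable M"
    by (cases "1 \<le> j"; cases "j \<le> k"; simp add: A_meas X_meas)+
  then show "(\<lambda>\<omega>. (if 1 \<le> j then A j \<omega> else 0, if j \<in> {1..k} then X j \<omega> else 0)) \<in> borel_measurable M"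
    by (rule borel_measurable_Pair)
qed auto

lemma measurable_X_Suc[measurable]: "X (Suc k) \<in> borel_measurable M"
  by (simp add: X_meas)

lemma arrival_history: "arrival k \<omega> = hist_arrival k (history k \<omega>)"
  unfolding arrival_def hist_arrival_def history_def by (intro sum.cong) auto

lemma vage_history: "vage A X k \<omega> = hist_age k (history k \<omega>)"
  unfolding vage_def hist_age_def history_def by (intro sum.cong) auto

lemma measurable_arrival[measurable]: "arrival k \<in> borel_measurable M"
  unfolding arrival_history[abs_def] by measurable

lemma measurable_vage[measurable]: "vage A X k \<in> borel_measurable M"
  unfolding vage_history[abs_def] by measurable

lemma arrival_Suc: "arrival (Suc k) \<omega> = arrival k \<omega> + X (Suc k) \<omega>"
  by (simp add: arrival_def)

lemma arrival_nonneg: "\<omega> \<in> space M \<Longrightarrow> 0 \<le> arrival k \<omega>"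
  unfolding arrival_def by (intro sum_nonneg) (auto intro: X_nonneg)

lemma vage_nonneg: "\<omega> \<in> space M \<Longrightarrow> 0 \<le> vage A X k \<omega>"
  unfolding vage_def by (intro sum_nonneg mult_nonneg_nonneg) (auto intro: X_nonneg A_nonneg)

lemma vage_le_Suc: "\<omega> \<in> space M \<Longrightarrow> vage A X k \<omega> \<le> vage A X (Suc k) \<omega>"
  using X_nonneg[of "Suc k" \<omega>] A_nonneg[of "Suc k" \<omega>] by (simp add: vage_def)

lemma emeasure_history_next_rect:
  assumes B: "B \<in> sets hist_space"
  shows "emeasure (distr M (hist_space \<Otimes>\<^sub>M borel) (\<lambda>\<omega>. (history k \<omega>, X (Suc k) \<omega>))) (B \<times> {z<..})
    = (\<integral>\<^sup>+\<omega>. indicator B (history k \<omega>) * ennreal (residual_surv (vage A X k \<omega>) z) \<partial>M)"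
proof -
  let ?H = "{\<omega> \<in> space M. history k \<omega> \<in> B}"
  have [measurable]: "?H \<in> sets M"
    using B by measurable
  have "emeasure (distr M (hist_space \<Otimes>\<^sub>M borel) (\<lambda>\<omega>. (history k \<omega>, X (Suc k) \<omega>))) (B \<times> {z<..})
      = emeasure M (?H \<inter> {\<omega> \<in> space M. z < X (Suc k) \<omega>})"
    using B by (subst emeasure_distr) (auto intro!: arg_cong[where f="emeasure M"])
  also have "\<dots> = (\<integral>\<^sup>+\<omega>. indicator B (history k \<omega>) * ennreal (residual_surv (vage A X k \<omega>) z) \<partial>M)"
  proof (cases "0 \<le> z")
    case True
    then have "cond_surv G v z = residual_surv v z" for v
      by (simp add: residual_surv_def)
    then have "measure M (?H \<inter> {\<omega> \<in> space M. z < X (Suc k) \<omega>})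
        = (\<integral>\<omega>. indicator ?H \<omega> * residual_surv (vage A X k \<omega>) z \<partial>M)"
      using kijima[OF True B, of k] by (simp add: history_def set_lebesgue_integral_def)
    moreover have "integrable M (\<lambda>\<omega>. indicator ?H \<omega> * residual_surv (vage A X k \<omega>) z)"
      by (intro integrable_const_bound[where B=1] AE_I2)
         (auto simp: residual_surv_nonneg residual_surv_le_1 indicator_def)
    ultimately have eq: "emeasure M (?H \<inter> {\<omega> \<in> space M. z < X (Suc k) \<omega>})
        = (\<integral>\<^sup>+\<omega>. ennreal (indicator ?H \<omega> * residual_surv (vage A X k \<omega>) z) \<partial>M)"
      by (simp add: emeasure_eq_measure nn_integral_eq_integral residual_surv_nonneg)
    show ?thesis
      unfolding eq by (intro nn_integral_cong) (simp add: indicator_def)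
  next
    case False
    then have "?H \<inter> {\<omega> \<in> space M. z < X (Suc k) \<omega>} = ?H"
      using X_nonneg[of "Suc k"] by force
    moreover have "residual_surv v z = 1" for v
      using False by (simp add: residual_surv_def)
    ultimately show ?thesis
      by (simp add: nn_integral_indicator[symmetric] indicator_def cong: nn_integral_cong_simp)
  qed
  finally show ?thesis .
qed

lemma measurable_Pair_residual: "Pair h \<in> residual v \<rightarrow>\<^sub>M hist_space \<Otimes>\<^sub>M borel"
  by (subst measurable_cong_sets[OF sets_residual refl]) (rule measurable_Pair1', simp)

lemma measurable_residual_hist_age[measurable]:
  "(\<lambda>h. residual (hist_age k h)) \<in> hist_space \<rightarrow>\<^sub>M subprob_algebra borel"
  by measurable

lemma distr_history_next:
  "distr M (hist_space \<Otimes>\<^sub>M borel) (\<lambda>\<omega>. (history k \<omega>, X (Suc k) \<omega>)) =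
    distr M hist_space (history k) \<bind> (\<lambda>h. distr (residual (hist_age k h)) (hist_space \<Otimes>\<^sub>M borel) (Pair h))"
proof (rule measure_eqI_pair_borel_Ioi[where N=hist_space])
  let ?J = "distr M (hist_space \<Otimes>\<^sub>M borel) (\<lambda>\<omega>. (history k \<omega>, X (Suc k) \<omega>))"
  let ?L = "distr M hist_space (history k)"
  let ?K = "\<lambda>h. distr (residual (hist_age k h)) (hist_space \<Otimes>\<^sub>M borel) (Pair h)"
  have K: "?K \<in> ?L \<rightarrow>\<^sub>M subprob_algebra (hist_space \<Otimes>\<^sub>M borel)"
    by (subst measurable_cong_sets[OF sets_distr refl], rule measurable_distr2[where M=borel])
       (simp_all add: measurable_id)
  show "sets (?L \<bind> ?K) = sets (hist_space \<Otimes>\<^sub>M borel)"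
    by (rule sets_bind) simp_all
  show "finite_measure ?J"
    by (intro prob_space.finite_measure prob_space_distr) simp
  fix B z assume B: "B \<in> sets hist_space"
  have "emeasure (?L \<bind> ?K) (B \<times> {z<..}) = (\<integral>\<^sup>+h. emeasure (?K h) (B \<times> {z<..}) \<partial>?L)"
    using B by (intro emeasure_bind[OF _ K]) auto
  also have "\<dots> = (\<integral>\<^sup>+h. indicator B h * ennreal (residual_surv (hist_age k h) z) \<partial>?L)"
    using B by (intro nn_integral_cong)
      (auto simp: emeasure_distr[OF measurable_Pair_residual] emeasure_residual_Ioi split: split_indicator)
  also have "\<dots> = (\<integral>\<^sup>+\<omega>. indicator B (history k \<omega>) * ennreal (residual_surv (vage A X k \<omega>) z) \<partial>M)"
    using B by (subst nn_integral_distr) (simp_all add: vage_history)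
  finally show "emeasure ?J (B \<times> {z<..}) = emeasure (?L \<bind> ?K) (B \<times> {z<..})"
    using B by (simp add: emeasure_history_next_rect)
qed simp

lemma nn_integral_history_next:
  assumes [measurable]: "case_prod \<Phi> \<in> borel_measurable (hist_space \<Otimes>\<^sub>M borel)"
  shows "(\<integral>\<^sup>+\<omega>. \<Phi> (history k \<omega>) (X (Suc k) \<omega>) \<partial>M) =
    (\<integral>\<^sup>+\<omega>. (\<integral>\<^sup>+x. \<Phi> (history k \<omega>) x \<partial>residual (vage A X k \<omega>)) \<partial>M)"
proof -
  let ?K = "\<lambda>h. distr (residual (hist_age k h)) (hist_space \<Otimes>\<^sub>M borel) (Pair h)"
  have K: "?K \<in> distr M hist_space (history k) \<rightarrow>\<^sub>M subprob_algebra (hist_space \<Otimes>\<^sub>M borel)"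
    by (subst measurable_cong_sets[OF sets_distr refl], rule measurable_distr2[where M=borel])
       (simp_all add: measurable_id)
  have "(\<integral>\<^sup>+\<omega>. \<Phi> (history k \<omega>) (X (Suc k) \<omega>) \<partial>M)
      = (\<integral>\<^sup>+p. case_prod \<Phi> p \<partial>distr M (hist_space \<Otimes>\<^sub>M borel) (\<lambda>\<omega>. (history k \<omega>, X (Suc k) \<omega>)))"
    by (subst nn_integral_distr) simp_all
  also have "\<dots> = (\<integral>\<^sup>+h. (\<integral>\<^sup>+p. case_prod \<Phi> p \<partial>?K h) \<partial>distr M hist_space (history k))"
    unfolding distr_history_next by (rule nn_integral_bind[OF _ K]) simp
  also have "\<dots> = (\<integral>\<^sup>+h. (\<integral>\<^sup>+x. \<Phi> h x \<partial>residual (hist_age k h)) \<partial>distr M hist_space (history k))"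
    by (intro nn_integral_cong) (simp add: nn_integral_distr[OF measurable_Pair_residual])
  also have "\<dots> = (\<integral>\<^sup>+\<omega>. (\<integral>\<^sup>+x. \<Phi> (history k \<omega>) x \<partial>residual (vage A X k \<omega>)) \<partial>M)"
    using nn_integral_measurable_subprob_algebra2[OF assms measurable_residual_hist_age]
    by (subst nn_integral_distr) (simp_all add: vage_history)
  finally show ?thesis .
qed

lemma integral_history_next:
  assumes [measurable]: "case_prod \<Phi> \<in> borel_measurable (hist_space \<Otimes>\<^sub>M borel)"
    and \<Phi>_nonneg: "\<And>h x. 0 \<le> \<Phi> h x" and \<Phi>_le_1: "\<And>h x. \<Phi> h x \<le> 1"
  shows "(\<integral>\<omega>. \<Phi> (history k \<omega>) (X (Suc k) \<omega>) \<partial>M) =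
    (\<integral>\<omega>. enn2real (\<integral>\<^sup>+x. ennreal (\<Phi> (history k \<omega>) x) \<partial>residual (vage A X k \<omega>)) \<partial>M)"
proof -
  let ?I = "\<lambda>h. \<integral>\<^sup>+x. ennreal (\<Phi> h x) \<partial>residual (hist_age k h)"
  have [measurable]: "?I \<in> borel_measurable hist_space"
    by (rule nn_integral_measurable_subprob_algebra2) measurable
  have "?I h \<le> 1" for h
  proof -
    interpret K: prob_space "residual (hist_age k h)"
      by (rule prob_space_residual)
    have "?I h \<le> (\<integral>\<^sup>+x. 1 \<partial>residual (hist_age k h))"
      by (intro nn_integral_mono) (simp add: \<Phi>_le_1)
    then show ?thesis
      using K.emeasure_space_1 by simp
  qed
  then have I_finite: "?I h \<noteq> \<top>" for h
    using ennreal_one_neq_top neq_top_trans by blast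
  have "(\<integral>\<omega>. \<Phi> (history k \<omega>) (X (Suc k) \<omega>) \<partial>M)
      = enn2real (\<integral>\<^sup>+\<omega>. ennreal (\<Phi> (history k \<omega>) (X (Suc k) \<omega>)) \<partial>M)"
    by (rule integral_eq_nn_integral) (simp_all add: \<Phi>_nonneg)
  also have "\<dots> = enn2real (\<integral>\<^sup>+\<omega>. ?I (history k \<omega>) \<partial>M)"
    by (subst nn_integral_history_next) (simp_all add: vage_history)
  also have "\<dots> = enn2real (\<integral>\<^sup>+\<omega>. ennreal (enn2real (?I (history k \<omega>))) \<partial>M)"
    using I_finite by (simp add: ennreal_enn2real_if)
  also have "\<dots> = (\<integral>\<omega>. enn2real (?I (history k \<omega>)) \<partial>M)"
    by (rule integral_eq_nn_integral[symmetric]) simp_all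
  finally show ?thesis
    by (simp add: vage_history)
qed

lemma indep_var_T_arrival: "indep_var borel T borel (arrival n)"
proof -
  define Z where "Z \<omega> = (\<lambda>k. (if 1 \<le> k then X k \<omega> else 0, if 1 \<le> k then A k \<omega> else 0))" for \<omega>
  define f where "f z = (\<Sum>j\<in>{1..n}. fst (z j))" for z :: "nat \<Rightarrow> real \<times> real"
  have f[measurable]: "f \<in> borel_measurable hist_space"
    unfolding f_def by measurable
  have "arrival n \<omega> = f (Z \<omega>)" for \<omega>
    unfolding Z_def f_def arrival_def by (intro sum.cong) auto
  then have arrival_vimage: "arrival n -` B \<inter> space M = Z -` (f -` B) \<inter> space M" for B
    by auto
  have "{arrival n -` B \<inter> space M | B. B \<in> sets borel} \<subseteq> {Z -` C \<inter> space M | C. C \<in> sets hist_space}"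
  proof safe
    fix B :: "real set" assume "B \<in> sets borel"
    then show "\<exists>C. arrival n -` B \<inter> space M = Z -` C \<inter> space M \<and> C \<in> sets hist_space"
      using measurable_sets[OF f] by (intro exI[of _ "f -` B"]) (simp add: arrival_vimage)
  qed
  with T_indep have "indep_set {T -` B \<inter> space M | B. B \<in> sets borel} {arrival n -` B \<inter> space M | B. B \<in> sets borel}"
    unfolding Z_def by (rule indep_set_mono[OF _ order_refl])
  then show ?thesis
    unfolding indep_var_eq
    by (intro conjI indep_set_sigma_sets Int_stable_vimage_sets T_meas measurable_arrival)
qed

lemma prob_arrival_le_T:
  "measure M {\<omega> \<in> space M. arrival n \<omega> \<le> T \<omega>} = (\<integral>\<omega>. surv_left M T (arrival n \<omega>) \<partial>M)"
proof -
  interpret LT: prob_space "distr M borel T"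
    by (rule prob_space_distr) simp
  interpret LS: prob_space "distr M borel (arrival n)"
    by (rule prob_space_distr) simp
  interpret P: pair_prob_space "distr M borel T" "distr M borel (arrival n)" ..
  have joint: "distr M borel T \<Otimes>\<^sub>M distr M borel (arrival n) = distr M (borel \<Otimes>\<^sub>M borel) (\<lambda>\<omega>. (T \<omega>, arrival n \<omega>))"
    using indep_var_T_arrival by (simp add: indep_var_distribution_eq)
  define D where "D = {p :: real \<times> real. snd p \<le> fst p}"
  have D: "D \<in> sets (borel \<Otimes>\<^sub>M borel)"
    unfolding D_def borel_prod by measurable
  have "emeasure M {\<omega> \<in> space M. arrival n \<omega> \<le> T \<omega>} = emeasure (distr M (borel \<Otimes>\<^sub>M borel) (\<lambda>\<omega>. (T \<omega>, arrival n \<omega>))) D"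
    using D by (subst emeasure_distr) (auto simp: D_def intro!: arg_cong[where f="emeasure M"])
  also have "\<dots> = (\<integral>\<^sup>+s. emeasure (distr M borel T) ((\<lambda>t. (t, s)) -` D) \<partial>distr M borel (arrival n))"
    using D by (simp add: joint[symmetric] P.emeasure_pair_measure_alt2)
  also have "\<dots> = (\<integral>\<^sup>+s. ennreal (surv_left M T s) \<partial>distr M borel (arrival n))"
    by (simp add: D_def emeasure_distr_atLeast[symmetric] atLeast_def)
  also have "\<dots> = (\<integral>\<^sup>+\<omega>. ennreal (surv_left M T (arrival n \<omega>)) \<partial>M)"
    by (subst nn_integral_distr) auto
  finally have "measure M {\<omega> \<in> space M. arrival n \<omega> \<le> T \<omega>} = enn2real (\<integral>\<^sup>+\<omega>. ennreal (surv_left M T (arrival n \<omega>)) \<partial>M)"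
    by (metis emeasure_eq_measure enn2real_ennreal measure_nonneg)
  then show ?thesis
    by (simp add: integral_eq_nn_integral surv_left_nonneg)
qed

text \<open>next_surv s v = P(T \<ge> s + Y), Y of residual law at age v: the conditional probability that
  the next failure precedes T, given arrival time s and virtual age v of the last one.\<close>

definition next_surv :: "real \<Rightarrow> real \<Rightarrow> real" where
  "next_surv s v = enn2real (\<integral>\<^sup>+x. ennreal (surv_left M T (s + x)) \<partial>residual v)"

lemma nn_integral_surv_left_residual_le:
  "(\<integral>\<^sup>+x. ennreal (surv_left M T (s + x)) \<partial>residual v) \<le> ennreal (surv_left M T s)"
proof -
  interpret K: prob_space "residual v"
    by (rule prob_space_residual)
  have "(\<integral>\<^sup>+x. ennreal (surv_left M T (s + x)) \<partial>residual v) \<le> (\<integral>\<^sup>+x. ennreal (surv_left M T s) \<partial>residual v)"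
    using AE_residual_nonneg[of v]
    by (intro nn_integral_mono_AE) (auto elim!: AE_mp intro!: ennreal_leI surv_left_antimono)
  then show ?thesis
    using K.emeasure_space_1 by simp
qed

lemma ennreal_next_surv: "ennreal (next_surv s v) = (\<integral>\<^sup>+x. ennreal (surv_left M T (s + x)) \<partial>residual v)"
proof -
  have "(\<integral>\<^sup>+x. ennreal (surv_left M T (s + x)) \<partial>residual v) \<noteq> \<top>"
    using nn_integral_surv_left_residual_le[where s=s and v=v] ennreal_neq_top neq_top_trans by blast
  then show ?thesis
    by (simp add: next_surv_def ennreal_enn2real_if)
qed

lemma next_surv_nonneg: "0 \<le> next_surv s v"
  by (simp add: next_surv_def)

lemma next_surv_le: "next_surv s v \<le> surv_left M T s"
  using nn_integral_surv_left_residual_le[where s=s and v=v] surv_left_nonneg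
  by (simp add: ennreal_next_surv[symmetric])

lemma borel_measurable_next_surv_hist[measurable]:
  "(\<lambda>h. next_surv (hist_arrival n h) (hist_age n h)) \<in> borel_measurable hist_space"
proof -
  have "(\<lambda>(h, x). ennreal (surv_left M T (hist_arrival n h + x))) \<in> borel_measurable (hist_space \<Otimes>\<^sub>M borel)"
    by measurable
  from nn_integral_measurable_subprob_algebra2[OF this measurable_residual_hist_age]
  show ?thesis
    unfolding next_surv_def by measurable
qed

lemma next_surv_mono_age:
  assumes "IFR G" "0 \<le> v" "v \<le> w"
  shows "next_surv s v \<le> next_surv s w"
proof -
  have "emeasure (residual v) {..c} \<le> emeasure (residual w) {..c}" for c
    using IFR_residual_surv_antimono[OF assms, of c] by (simp add: emeasure_residual_atMost ennreal_leI)
  then have "ennreal (next_surv s v) \<le> ennreal (next_surv s w)"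
    unfolding ennreal_next_surv
    by (intro nn_integral_surv_left_mono[OF T_meas prob_space_residual _ prob_space_residual]) simp_all
  then show ?thesis
    by (simp add: ennreal_le_iff next_surv_nonneg)
qed

lemma next_surv_step:
  assumes "DFR (surv M T)" "IFR G" "0 \<le> s" "s \<le> s'" "0 \<le> v" "v \<le> v'"
  shows "surv_left M T s' * next_surv s v \<le> surv_left M T s * next_surv s' v'"
proof -
  let ?F = "surv_left M T"
  have [measurable]: "(\<lambda>x. ennreal (?F (a + x))) \<in> borel_measurable (residual v')" for a
    by measurable
  have "ennreal (?F s' * next_surv s v) \<le> ennreal (?F s' * next_surv s v')"
    using assms surv_left_nonneg
    by (intro ennreal_leI mult_left_mono next_surv_mono_age) auto
  also have "\<dots> = (\<integral>\<^sup>+x. ennreal (?F s' * ?F (s + x)) \<partial>residual v')"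
    by (simp add: ennreal_mult surv_left_nonneg next_surv_nonneg ennreal_next_surv nn_integral_cmult)
  also have "\<dots> \<le> (\<integral>\<^sup>+x. ennreal (?F s * ?F (s' + x)) \<partial>residual v')"
  proof (intro nn_integral_mono_AE)
    show "AE x in residual v'. ennreal (?F s' * ?F (s + x)) \<le> ennreal (?F s * ?F (s' + x))"
      using AE_residual_nonneg[of v']
    proof eventually_elim
      case (elim x)
      then show ?case
        using DFR_surv_left[OF T_meas T_nonneg assms(1,3,4) elim] by (simp add: mult.commute ennreal_leI)
    qed
  qed
  also have "\<dots> = ennreal (?F s * next_surv s' v')"
    by (simp add: ennreal_mult surv_left_nonneg next_surv_nonneg ennreal_next_surv nn_integral_cmult)
  finally show ?thesis
    by (simp add: ennreal_le_iff surv_left_nonneg next_surv_nonneg)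
qed

lemma integral_surv_left_arrival_Suc:
  assumes [measurable]: "g \<in> borel_measurable hist_space"
    and g_nonneg: "\<And>h. 0 \<le> g h" and g_le_1: "\<And>h. g h \<le> 1"
  shows "(\<integral>\<omega>. surv_left M T (arrival (Suc n) \<omega>) * g (history n \<omega>) \<partial>M) =
    (\<integral>\<omega>. next_surv (arrival n \<omega>) (vage A X n \<omega>) * g (history n \<omega>) \<partial>M)"
proof -
  let ?F = "surv_left M T"
  have [measurable]: "(\<lambda>x. ennreal (?F (a + x))) \<in> borel_measurable (residual v)" for a v
    by measurable
  have "(\<integral>\<omega>. ?F (arrival (Suc n) \<omega>) * g (history n \<omega>) \<partial>M)
      = (\<integral>\<omega>. ?F (hist_arrival n (history n \<omega>) + X (Suc n) \<omega>) * g (history n \<omega>) \<partial>M)"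
    by (simp add: arrival_Suc arrival_history[symmetric])
  also have "\<dots> = (\<integral>\<omega>. enn2real (\<integral>\<^sup>+x. ennreal (?F (hist_arrival n (history n \<omega>) + x) * g (history n \<omega>))
      \<partial>residual (vage A X n \<omega>)) \<partial>M)"
    by (rule integral_history_next[where \<Phi>="\<lambda>h x. ?F (hist_arrival n h + x) * g h"])
       (simp_all add: surv_left_nonneg surv_left_le_1 g_nonneg g_le_1 mult_le_one)
  also have "\<dots> = (\<integral>\<omega>. next_surv (arrival n \<omega>) (vage A X n \<omega>) * g (history n \<omega>) \<partial>M)"
  proof (intro Bochner_Integration.integral_cong refl)
    have "(\<integral>\<^sup>+x. ennreal (?F (a + x) * c) \<partial>residual v) = ennreal (next_surv a v * c)" if "0 \<le> c" for a c v
      using that by (simp add: ennreal_mult surv_left_nonneg next_surv_nonneg nn_integral_multc ennreal_next_surv)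
    then show "enn2real (\<integral>\<^sup>+x. ennreal (?F (hist_arrival n (history n \<omega>) + x) * g (history n \<omega>))
        \<partial>residual (vage A X n \<omega>)) = next_surv (arrival n \<omega>) (vage A X n \<omega>) * g (history n \<omega>)" for \<omega>
      by (simp add: g_nonneg next_surv_nonneg arrival_history[symmetric])
  qed
  finally show ?thesis .
qed

definition next_surv_ratio :: "nat \<Rightarrow> (nat \<Rightarrow> real \<times> real) \<Rightarrow> real" where
  "next_surv_ratio n h = next_surv (hist_arrival n h) (hist_age n h) / surv_left M T (hist_arrival n h)"

lemma measurable_next_surv_ratio[measurable]: "next_surv_ratio n \<in> borel_measurable hist_space"
  unfolding next_surv_ratio_def by measurable

lemma next_surv_ratio_nonneg: "0 \<le> next_surv_ratio n h"
  by (simp add: next_surv_ratio_def next_surv_nonneg surv_left_nonneg)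

lemma next_surv_ratio_le_1: "next_surv_ratio n h \<le> 1"
  using next_surv_le[of "hist_arrival n h" "hist_age n h"] surv_left_nonneg[of T "hist_arrival n h"]
  by (auto simp: next_surv_ratio_def divide_le_eq_1)

lemma next_surv_ratio_history:
  "next_surv_ratio n (history n \<omega>) = next_surv (arrival n \<omega>) (vage A X n \<omega>) / surv_left M T (arrival n \<omega>)"
  by (simp add: next_surv_ratio_def arrival_history vage_history)

lemma next_surv_eq_mult_ratio:
  "next_surv (arrival n \<omega>) (vage A X n \<omega>) = surv_left M T (arrival n \<omega>) * next_surv_ratio n (history n \<omega>)"
  using next_surv_le[of "arrival n \<omega>" "vage A X n \<omega>"] next_surv_nonneg[of "arrival n \<omega>" "vage A X n \<omega>"]
  by (auto simp: next_surv_ratio_history)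

lemma surv_left_mult_next_surv_ratio_le:
  assumes "DFR (surv M T)" "IFR G" "\<omega> \<in> space M"
  shows "surv_left M T (arrival (Suc n) \<omega>) * next_surv_ratio n (history n \<omega>)
    \<le> next_surv (arrival (Suc n) \<omega>) (vage A X (Suc n) \<omega>)"
proof (cases "surv_left M T (arrival n \<omega>) = 0")
  case False
  then have "0 < surv_left M T (arrival n \<omega>)"
    using surv_left_nonneg order_le_neq_trans by metis
  moreover have "surv_left M T (arrival (Suc n) \<omega>) * next_surv (arrival n \<omega>) (vage A X n \<omega>)
      \<le> surv_left M T (arrival n \<omega>) * next_surv (arrival (Suc n) \<omega>) (vage A X (Suc n) \<omega>)"
    using assms X_nonneg[of "Suc n" \<omega>]
    by (intro next_surv_step arrival_nonneg vage_nonneg vage_le_Suc) (auto simp: arrival_Suc)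
  ultimately show ?thesis
    by (simp add: next_surv_ratio_history field_simps)
qed (simp add: next_surv_ratio_history next_surv_nonneg)

lemma integral_surv_left_mult_next_surv_ratio_le:
  assumes "DFR (surv M T)" "IFR G"
  shows "(\<integral>\<omega>. surv_left M T (arrival (Suc n) \<omega>) * next_surv_ratio n (history n \<omega>) \<partial>M)
    \<le> (\<integral>\<omega>. surv_left M T (arrival (Suc (Suc n)) \<omega>) \<partial>M)"
proof -
  have "(\<integral>\<omega>. surv_left M T (arrival (Suc n) \<omega>) * next_surv_ratio n (history n \<omega>) \<partial>M)
      \<le> (\<integral>\<omega>. next_surv (arrival (Suc n) \<omega>) (vage A X (Suc n) \<omega>) \<partial>M)"
  proof (rule integral_mono)
    show "integrable M (\<lambda>\<omega>. surv_left M T (arrival (Suc n) \<omega>) * next_surv_ratio n (history n \<omega>))"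
      by (intro integrable_nonneg_le_1)
         (simp_all add: surv_left_nonneg surv_left_le_1 next_surv_ratio_nonneg next_surv_ratio_le_1 mult_le_one)
    show "integrable M (\<lambda>\<omega>. next_surv (arrival (Suc n) \<omega>) (vage A X (Suc n) \<omega>))"
      by (intro integrable_nonneg_le_1)
         (auto simp: arrival_history vage_history next_surv_nonneg intro: order_trans[OF next_surv_le surv_left_le_1])
  qed (rule surv_left_mult_next_surv_ratio_le[OF assms])
  also have "\<dots> = (\<integral>\<omega>. surv_left M T (arrival (Suc (Suc n)) \<omega>) \<partial>M)"
    using integral_surv_left_arrival_Suc[where g="\<lambda>_. 1" and n="Suc n"] by simp
  finally show ?thesis .
qed

lemma prob_Ncount_ge:
  "measure M {\<omega> \<in> space M. enat n \<le> Ncount X (T \<omega>) \<omega>} = (\<integral>\<omega>. surv_left M T (arrival n \<omega>) \<partial>M)"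
proof -
  have "enat n \<le> Ncount X (T \<omega>) \<omega> \<longleftrightarrow> arrival n \<omega> \<le> T \<omega>" if "\<omega> \<in> space M" for \<omega>
    unfolding arrival_def by (rule enat_le_Ncount_iff) (use X_nonneg T_nonneg that in auto)
  then have "{\<omega> \<in> space M. enat n \<le> Ncount X (T \<omega>) \<omega>} = {\<omega> \<in> space M. arrival n \<omega> \<le> T \<omega>}"
    by auto
  then show ?thesis
    by (simp add: prob_arrival_le_T)
qed

theorem discrete_DFR_Ncount:
  assumes "DFR (surv M T)" "IFR G"
  shows "discrete_DFR M (\<lambda>\<omega>. Ncount X (T \<omega>) \<omega>)"
  unfolding discrete_DFR_def prob_Ncount_ge
proof
  fix n :: nat
  let ?F = "surv_left M T" and ?\<rho> = "\<lambda>\<omega>. next_surv_ratio n (history n \<omega>)"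
  let ?p = "\<lambda>k. \<integral>\<omega>. ?F (arrival k \<omega>) \<partial>M"
  have "(?p (Suc n))\<^sup>2 = (\<integral>\<omega>. ?F (arrival n \<omega>) * ?\<rho> \<omega> \<partial>M)\<^sup>2"
    using integral_surv_left_arrival_Suc[where g="\<lambda>_. 1" and n=n] by (simp add: next_surv_eq_mult_ratio)
  also have "\<dots> \<le> ?p n * (\<integral>\<omega>. ?F (arrival n \<omega>) * (?\<rho> \<omega>)\<^sup>2 \<partial>M)"
    by (intro integral_mult_square_le integrable_nonneg_le_1)
       (simp_all add: surv_left_nonneg surv_left_le_1 next_surv_ratio_nonneg next_surv_ratio_le_1 mult_le_one
         power_le_one)
  also have "\<dots> = ?p n * (\<integral>\<omega>. ?F (arrival (Suc n) \<omega>) * ?\<rho> \<omega> \<partial>M)"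
    using integral_surv_left_arrival_Suc[OF measurable_next_surv_ratio next_surv_ratio_nonneg next_surv_ratio_le_1]
    by (simp add: next_surv_eq_mult_ratio power2_eq_square mult.assoc)
  also have "\<dots> \<le> ?p n * ?p (Suc (Suc n))"
    using integral_surv_left_mult_next_surv_ratio_le[OF assms]
    by (intro mult_left_mono) (simp_all add: surv_left_nonneg)
  finally show "(?p (n + 1))\<^sup>2 \<le> ?p n * ?p (n + 2)"
    by simp
qed
end

theorem proposition4p1:
  fixes M :: "'a measure"
    and A X :: "nat \<Rightarrow> 'a \<Rightarrow> real"
    and T :: "'a \<Rightarrow> real"
    and G :: "real \<Rightarrow> real"
  assumes P: "prob_space M"
    and G_surv: "\<exists>\<mu>. prob_space \<mu> \<and> sets \<mu> = sets borel \<and> emeasure \<mu> {..<0} = 0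
                    \<and> (\<forall>t. G t = measure \<mu> {t<..})"
    and A_meas: "\<And>k. 1 \<le> k \<Longrightarrow> A k \<in> borel_measurable M"
    and X_meas: "\<And>k. 1 \<le> k \<Longrightarrow> X k \<in> borel_measurable M"
    and A_nonneg: "\<And>k \<omega>. 1 \<le> k \<Longrightarrow> \<omega> \<in> space M \<Longrightarrow> 0 \<le> A k \<omega>"
    and X_nonneg: "\<And>k \<omega>. 1 \<le> k \<Longrightarrow> \<omega> \<in> space M \<Longrightarrow> 0 \<le> X k \<omega>"
    and kijima: "\<And>k z B. 0 \<le> z \<Longrightarrow>
        B \<in> sets (PiM UNIV (\<lambda>_. borel :: (real \<times> real) measure)) \<Longrightarrow>
        measure M ({\<omega> \<in> space M.
              (\<lambda>j. (if 1 \<le> j then A j \<omega> else 0, if j \<in> {1..k} then X j \<omega> else 0)) \<in> B}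
            \<inter> {\<omega> \<in> space M. X (Suc k) \<omega> > z})
        = (\<integral>\<omega>\<in>{\<omega> \<in> space M.
              (\<lambda>j. (if 1 \<le> j then A j \<omega> else 0, if j \<in> {1..k} then X j \<omega> else 0)) \<in> B}.
              cond_surv G (vage A X k \<omega>) z \<partial>M)"
    and T_meas: "T \<in> borel_measurable M"
    and T_nonneg: "\<And>\<omega>. \<omega> \<in> space M \<Longrightarrow> 0 \<le> T \<omega>"
    and T_indep: "prob_space.indep_set M
                    {T -` S \<inter> space M | S. S \<in> sets (borel :: real measure)}
                    {(\<lambda>\<omega> k. (if 1 \<le> k then X k \<omega> else 0, if 1 \<le> k then A k \<omega> else 0)) -` S \<inter> space M
                       | S. S \<in> sets (PiM UNIV (\<lambda>_. borel :: (real \<times> real) measure))}"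
    and T_DFR: "DFR (surv M T)"
    and G_IFR: "IFR G"
  shows "discrete_DFR M (\<lambda>\<omega>. Ncount X (T \<omega>) \<omega>)"
proof -
  obtain \<mu> where \<mu>: "prob_space \<mu>" "sets \<mu> = sets borel" "\<And>t. G t = measure \<mu> {t<..}"
    using G_surv by blast
  interpret kijima_model M \<mu> G A X T
    by (intro kijima_model.intro kijima_model_axioms.intro survival_function.intro P \<mu>)
       (use A_meas X_meas A_nonneg X_nonneg kijima T_meas T_nonneg T_indep in auto)
  show ?thesis
    using T_DFR G_IFR by (rule discrete_DFR_Ncount)
qed

end
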